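(* Consider the FlexGT/Acc-FlexGT recursion in the context, and suppose (S), (V), (G) hold. If $\gamma\le\frac{1}{4\beta L}$, then for all $k\ge0$, $$\mathbb{E}\|\tilde{\mathbf x}_{\beta(k+1)}\|^2\le\frac{1+\bar\rho_W}{2}\mathbb{E}\|\tilde{\mathbf x}_{\beta k}\|^2+\frac{4\gamma^2\beta^2\bar\rho_W}{1-\bar\rho_W}\mathbb{E}\|\tilde{\mathbf y}_{\beta k}\|^2+\frac{8n\gamma^2\beta^2\bar\rho_W}{1-\bar\rho_W}\sigma^2 .$$
   Context: Problem: $n$ nodes, each with $f_i(x)=\mathbb{E}_{\xi_i\sim\mathcal D_i}[f_i(x;\xi_i)]$ on $\mathbb{R}^p$, $f=\frac1n\sum_i f_i$. Stochastic oracle: unbiased $\nabla f_i(x;\xi_i)$, independent samples across nodes and iterations. Assumptions: (S) each $f_i$ has $L$-Lipschitz gradient. (V) $\mathbb{E}\|\nabla f_i(x;\xi_i)-\nabla f_i(x)\|^2\le\sigma^2$. (G) $W$ doubly stochastic, $\rho_W:=\|W-\mathbf J\|_2^2<1$, $\mathbf J=\mathbf 1\mathbf 1^\top/n$. Algorithm: integers $\alpha,\beta\ge1$, stepsize $\gamma>0$; $\bar W=W^\alpha$ (FlexGT) or $\bar W=M_\alpha$ (Acc-FlexGT) with $M_{-1}=M_0=I$, $M_{s+1}=(1+\eta)WM_s-\eta M_{s-1}$, $\eta=\frac{1-\sqrt{1-\rho_W}}{1+\sqrt{1-\rho_W}}$; $\bar\rho_W:=\|\bar W-\mathbf J\|_2^2$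 (spectral norm), assumed $<1$. Iterates $\mathbf x_t,\mathbf y_t\in\mathbb{R}^{n\times p}$; snapshot $\mathbf z_t=\mathbf x_{\beta\lfloor t/\beta\rfloor}$; $\nabla G_t$ has rows $\nabla f_i(z_{i,t};\xi_{i,t})$ with fresh samples. $\mathbf y_0=\nabla G_0$. For round $k\ge0$, $j=0,\dots,\beta-2$: $\mathbf x_{\beta k+j+1}=\mathbf x_{\beta k+j}-\gamma\mathbf y_{\beta k+j}$, $\mathbf y_{\beta k+j+1}=\mathbf y_{\beta k+j}+\nabla G_{\beta k+j+1}-\nabla G_{\beta k+j}$; round end: $\mathbf x_{\beta(k+1)}=\bar W(\mathbf x_{\beta k}-\gamma\sum_{j=0}^{\beta-1}\mathbf y_{\beta k+j})$, $\mathbf y_{\beta(k+1)}=\bar W(\mathbf y_{\beta k}+\nabla G_{\beta(k+1)}-\nabla G_{\beta k})$. Notation: $\|\cdot\|$ Euclidean/Frobenius; $\bar x_t=\mathbf 1^\top\mathbf x_t/n$, $\tilde{\mathbf x}_t=\mathbf x_t-\mathbf 1\bar x_t$, $\bar y_t=\mathbf 1^\top\mathbf y_t/n$, $\tilde{\mathbf y}_t=\mathbf y_t-\mathbf 1\bar y_t$. *)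

theory Defs
  imports "HOL-Analysis.Analysis" "HOL-Probability.Probability"
begin

text \<open>n x p matrices are represented as 'a ^ 'n (rows indexed by the finite type 'n, n = CARD('n),
  each row in the Euclidean space 'a = R^p).  The norm on 'a ^ 'n is the Frobenius norm.\<close>

definition Jmat :: "real ^ 'n ^ 'n" where
  "Jmat = (\<chi> i j. 1 / real CARD('n))"

definition doubly_stochastic :: "real ^ 'n ^ 'n \<Rightarrow> bool" where
  "doubly_stochastic W \<longleftrightarrow> (\<forall>i j. W $ i $ j \<ge> 0) \<and>
     (\<forall>i. (\<Sum>j\<in>UNIV. W $ i $ j) = 1) \<and> (\<forall>j. (\<Sum>i\<in>UNIV. W $ i $ j) = 1)"

definition spec_norm :: "real ^ 'n ^ 'n \<Rightarrow> real" where
  "spec_norm A = onorm (\<lambda>v. A *v v)"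

definition rho :: "real ^ 'n ^ 'n \<Rightarrow> real" where
  "rho A = (spec_norm (A - Jmat))\<^sup>2"

primrec mat_pow :: "real ^ 'n ^ 'n \<Rightarrow> nat \<Rightarrow> real ^ 'n ^ 'n" where
  "mat_pow W 0 = mat 1"
| "mat_pow W (Suc k) = W ** mat_pow W k"

text \<open>Chebyshev-accelerated gossip: M_{-1} = M_0 = I, M_{s+1} = (1+eta) W M_s - eta M_{s-1}\<close>
fun acc_mat :: "real ^ 'n ^ 'n \<Rightarrow> real \<Rightarrow> nat \<Rightarrow> real ^ 'n ^ 'n" where
  "acc_mat W \<eta> 0 = mat 1"
| "acc_mat W \<eta> (Suc 0) = (1 + \<eta>) *\<^sub>R (W ** mat 1) - \<eta> *\<^sub>R mat 1"
| "acc_mat W \<eta> (Suc (Suc s)) = (1 + \<eta>) *\<^sub>R (W ** acc_mat W \<eta> (Suc s)) - \<eta> *\<^sub>R acc_mat W \<eta> s"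

definition acc_eta :: "real ^ 'n ^ 'n \<Rightarrow> real" where
  "acc_eta W = (1 - sqrt (1 - rho W)) / (1 + sqrt (1 - rho W))"

definition mix :: "real ^ 'n ^ 'n \<Rightarrow> 'a::real_vector ^ 'n \<Rightarrow> 'a ^ 'n" where
  "mix A X = (\<chi> i. \<Sum>j\<in>UNIV. A $ i $ j *\<^sub>R X $ j)"

definition avg :: "'a::real_vector ^ 'n \<Rightarrow> 'a" where
  "avg X = (1 / real CARD('n)) *\<^sub>R (\<Sum>i\<in>UNIV. X $ i)"

definition tilde :: "'a::real_vector ^ 'n \<Rightarrow> 'a ^ 'n" where
  "tilde X = X - (\<chi> i. avg X)"

definition stoch_grad ::
  "('n \<Rightarrow> 'a \<Rightarrow> 's \<Rightarrow> 'a) \<Rightarrow> (nat \<Rightarrow> 'n \<Rightarrow> 'w \<Rightarrow> 's) \<Rightarrow> nat \<Rightarrow> 'a ^ 'n \<Rightarrow> 'w \<Rightarrow> 'a ^ 'n" where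
  "stoch_grad g \<xi> t Z \<omega> = (\<chi> i. g i (Z $ i) (\<xi> t i \<omega>))"

text \<open>FlexGT iterates (x_t, y_t, z_t) for a fixed outcome omega, with z_t = x_{beta floor(t/beta)}.\<close>
fun flexgt ::
  "real ^ 'n ^ 'n \<Rightarrow> real \<Rightarrow> nat \<Rightarrow> ('n \<Rightarrow> 'a::real_vector \<Rightarrow> 's \<Rightarrow> 'a) \<Rightarrow>
   (nat \<Rightarrow> 'n \<Rightarrow> 'w \<Rightarrow> 's) \<Rightarrow> 'a ^ 'n \<Rightarrow> 'w \<Rightarrow> nat \<Rightarrow> (('a ^ 'n) \<times> ('a ^ 'n) \<times> ('a ^ 'n))" where
  "flexgt Wb \<gamma> \<beta> g \<xi> x0 \<omega> 0 = (x0, stoch_grad g \<xi> 0 x0 \<omega>, x0)"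
| "flexgt Wb \<gamma> \<beta> g \<xi> x0 \<omega> (Suc t) =
     (case flexgt Wb \<gamma> \<beta> g \<xi> x0 \<omega> t of (x, y, z) \<Rightarrow>
       (if Suc t mod \<beta> = 0 then
          (let x' = mix Wb (x - \<gamma> *\<^sub>R y)
           in (x', mix Wb (y + stoch_grad g \<xi> (Suc t) x' \<omega> - stoch_grad g \<xi> t z \<omega>), x'))
        else
          (x - \<gamma> *\<^sub>R y, y + stoch_grad g \<xi> (Suc t) z \<omega> - stoch_grad g \<xi> t z \<omega>, z)))"

definition xs :: "real ^ 'n ^ 'n \<Rightarrow> real \<Rightarrow> nat \<Rightarrow> ('n \<Rightarrow> 'a::real_vector \<Rightarrow> 's \<Rightarrow> 'a) \<Rightarrow>
   (nat \<Rightarrow> 'n \<Rightarrow> 'w \<Rightarrow> 's) \<Rightarrow> 'a ^ 'n \<Rightarrow> nat \<Rightarrow> 'w \<Rightarrow> 'a ^ 'n" where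
  "xs Wb \<gamma> \<beta> g \<xi> x0 t \<omega> = fst (flexgt Wb \<gamma> \<beta> g \<xi> x0 \<omega> t)"

definition ys :: "real ^ 'n ^ 'n \<Rightarrow> real \<Rightarrow> nat \<Rightarrow> ('n \<Rightarrow> 'a::real_vector \<Rightarrow> 's \<Rightarrow> 'a) \<Rightarrow>
   (nat \<Rightarrow> 'n \<Rightarrow> 'w \<Rightarrow> 's) \<Rightarrow> 'a ^ 'n \<Rightarrow> nat \<Rightarrow> 'w \<Rightarrow> 'a ^ 'n" where
  "ys Wb \<gamma> \<beta> g \<xi> x0 t \<omega> = fst (snd (flexgt Wb \<gamma> \<beta> g \<xi> x0 \<omega> t))"

end

theory Submission
  imports Defs
begin

text \<open>
  Let V = x(beta k) - gamma (beta y(beta k) + Delta), where the drift Delta collects the differences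
  between the stochastic gradients sampled during round k and the one sampled at its start, all
  evaluated at the frozen snapshot x(beta k); then x(beta (k + 1)) = Wbar V.  Because Wbar has unit
  row and column sums, the consensus error contracts, |tilde (Wbar V)|^2 <= rho |tilde V|^2, and
  Young's inequality splits rho (u + v)^2 into (1 + rho)/2 u^2 + 2 rho/(1 - rho) v^2.  Component i
  of Delta is a weighted sum of centred noises g_i(x, xi(beta k + l)) - grad f_i(x); each is
  independent of all samples drawn before it, so the cross terms vanish and
  E |Delta|^2 <= n beta^2 sigma^2.
\<close>

lemma matrix_mult_diff_ldistrib: "(A :: 'a::ring_1 ^ 'n ^ 'm) ** (B - C) = A ** B - A ** (C :: 'a ^ 'p ^ 'n)"
  by (simp add: matrix_matrix_mult_def vec_eq_iff algebra_simps sum_subtractf)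

lemma matrix_mult_diff_rdistrib: "((A :: 'a::ring_1 ^ 'n ^ 'm) - B) ** (C :: 'a ^ 'p ^ 'n) = A ** C - B ** C"
  by (simp add: matrix_matrix_mult_def vec_eq_iff algebra_simps sum_subtractf)

text \<open>Unit row and column sums, without the sign condition of \<^const>\<open>doubly_stochastic\<close>:
  the Chebyshev iterates \<^const>\<open>acc_mat\<close> may have negative entries.\<close>

definition Jmat_absorbing :: "real ^ 'n ^ 'n \<Rightarrow> bool" where
  "Jmat_absorbing A \<longleftrightarrow> Jmat ** A = Jmat \<and> A ** Jmat = Jmat"

lemma Jmat_absorbing_mat_1: "Jmat_absorbing (mat 1 :: real ^ 'n::finite ^ 'n)"
  by (simp add: Jmat_absorbing_def)

lemma Jmat_absorbing_mult:
  "Jmat_absorbing A \<Longrightarrow> Jmat_absorbing B \<Longrightarrow> Jmat_absorbing (A ** B :: real ^ 'n::finite ^ 'n)"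
  unfolding Jmat_absorbing_def by (metis matrix_mul_assoc)

lemma Jmat_absorbing_affine:
  assumes "Jmat_absorbing A" "Jmat_absorbing B" "a - b = 1"
  shows "Jmat_absorbing (a *\<^sub>R A - b *\<^sub>R B :: real ^ 'n::finite ^ 'n)"
  using assms unfolding Jmat_absorbing_def
  by (simp add: matrix_mult_diff_ldistrib matrix_mult_diff_rdistrib matrix_scalar_ac
      flip: scalar_matrix_assoc scaleR_diff_left)

lemma doubly_stochastic_Jmat_absorbing:
  "doubly_stochastic W \<Longrightarrow> Jmat_absorbing (W :: real ^ 'n::finite ^ 'n)"
  unfolding doubly_stochastic_def Jmat_absorbing_def Jmat_def matrix_matrix_mult_def
  by (simp add: vec_eq_iff flip: sum_divide_distrib)

lemma Jmat_absorbing_mat_pow: "Jmat_absorbing W \<Longrightarrow> Jmat_absorbing (mat_pow W s)"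
  by (induction s) (simp_all add: Jmat_absorbing_mat_1 Jmat_absorbing_mult)

lemma Jmat_absorbing_acc_mat: "Jmat_absorbing W \<Longrightarrow> Jmat_absorbing (acc_mat W \<eta> s)"
  by (induction W \<eta> s rule: acc_mat.induct)
     (simp_all add: Jmat_absorbing_affine Jmat_absorbing_mult Jmat_absorbing_mat_1)

lemma Jmat_idem: "Jmat ** Jmat = (Jmat :: real ^ 'n::finite ^ 'n)"
  by (simp add: Jmat_def matrix_matrix_mult_def vec_eq_iff)

lemma mix_add: "mix A (X + Y) = mix A X + mix A Y"
  by (simp add: mix_def vec_eq_iff scaleR_add_right sum.distrib)

lemma mix_diff: "mix A (X - Y) = mix A X - mix A Y"
  by (simp add: mix_def vec_eq_iff scaleR_diff_right sum_subtractf)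

lemma mix_scaleR: "mix A (c *\<^sub>R X) = c *\<^sub>R mix A X"
  by (simp add: mix_def vec_eq_iff scaleR_sum_right mult.commute)

lemma mix_matrix_diff: "mix (A - B) X = mix A X - mix B X"
  by (simp add: mix_def vec_eq_iff scaleR_diff_left sum_subtractf)

lemma mix_mix: "mix A (mix B X) = mix (A ** B :: real ^ 'n::finite ^ 'n) X"
proof -
  have "mix A (mix B X) $ i = mix (A ** B) X $ i" for i
  proof -
    have "mix A (mix B X) $ i = (\<Sum>k\<in>UNIV. \<Sum>j\<in>UNIV. (A$i$k * B$k$j) *\<^sub>R X$j)"
      by (simp add: mix_def scaleR_sum_right)
    also have "\<dots> = (\<Sum>j\<in>UNIV. \<Sum>k\<in>UNIV. (A$i$k * B$k$j) *\<^sub>R X$j)"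
      by (rule sum.swap)
    also have "\<dots> = mix (A ** B) X $ i"
      by (simp add: mix_def matrix_matrix_mult_def scaleR_sum_left)
    finally show ?thesis .
  qed
  then show ?thesis by (simp add: vec_eq_iff)
qed

lemma tilde_eq_mix_Jmat: "tilde X = X - mix Jmat X"
  by (simp add: tilde_def mix_def Jmat_def avg_def vec_eq_iff scaleR_sum_right)

lemma tilde_add: "tilde (X + Y) = tilde X + tilde Y"
  by (simp add: tilde_eq_mix_Jmat mix_add)

lemma tilde_diff: "tilde (X - Y) = tilde X - tilde Y"
  by (simp add: tilde_eq_mix_Jmat mix_diff)

lemma tilde_scaleR: "tilde (c *\<^sub>R X) = c *\<^sub>R tilde X"
  by (simp add: tilde_eq_mix_Jmat mix_scaleR scaleR_diff_right)

lemma tilde_mix: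
  assumes "Jmat_absorbing A"
  shows "tilde (mix A X) = mix (A - Jmat) (tilde X)"
  using assms unfolding Jmat_absorbing_def tilde_eq_mix_Jmat mix_diff mix_matrix_diff
  by (simp add: mix_mix Jmat_idem)

lemma power2_norm_vec: "(norm (X :: 'a::real_normed_vector ^ 'n::finite))\<^sup>2 = (\<Sum>i\<in>UNIV. (norm (X $ i))\<^sup>2)"
  unfolding norm_vec_def L2_set_def by (simp add: sum_nonneg)

lemma power2_norm_euclidean: "(norm (v :: 'a::euclidean_space))\<^sup>2 = (\<Sum>b\<in>Basis. (v \<bullet> b)\<^sup>2)"
  unfolding power2_norm_eq_inner by (subst euclidean_inner) (simp add: power2_eq_square)

lemma power2_norm_mix_le:
  fixes X :: "'a::euclidean_space ^ 'n::finite"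
  shows "(norm (mix A X))\<^sup>2 \<le> (spec_norm A)\<^sup>2 * (norm X)\<^sup>2"
proof -
  define col where "col b = (\<chi> j. X $ j \<bullet> b)" for b
  have mix_col: "mix A X $ i \<bullet> b = (A *v col b) $ i" for i b
    by (simp add: mix_def col_def matrix_vector_mult_def inner_sum_left)
  have spec_norm_bound: "(norm (A *v v))\<^sup>2 \<le> (spec_norm A)\<^sup>2 * (norm v)\<^sup>2" for v
  proof -
    have "norm (A *v v) \<le> spec_norm A * norm v"
      unfolding spec_norm_def by (rule onorm) simp
    then show ?thesis
      by (metis norm_ge_zero power_mono power_mult_distrib)
  qed
  have "(norm (mix A X))\<^sup>2 = (\<Sum>i\<in>UNIV. \<Sum>b\<in>Basis. ((A *v col b) $ i)\<^sup>2)"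
    by (simp add: power2_norm_vec power2_norm_euclidean mix_col)
  also have "\<dots> = (\<Sum>b\<in>Basis. (norm (A *v col b))\<^sup>2)"
    by (simp add: power2_norm_vec) (rule sum.swap)
  also have "\<dots> \<le> (\<Sum>b\<in>Basis. (spec_norm A)\<^sup>2 * (norm (col b))\<^sup>2)"
    by (intro sum_mono spec_norm_bound)
  also have "\<dots> = (spec_norm A)\<^sup>2 * (norm X)\<^sup>2"
    by (simp add: power2_norm_vec power2_norm_euclidean col_def flip: sum_distrib_left)
       (rule disjI2, rule sum.swap)
  finally show ?thesis .
qed

lemma power2_norm_tilde_le: "(norm (tilde (X :: 'a::real_inner ^ 'n::finite)))\<^sup>2 \<le> (norm X)\<^sup>2"
proof -
  define m where "m = avg X"
  have sum_eq: "(\<Sum>i\<in>UNIV. X $ i) = real CARD('n) *\<^sub>R m"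
    by (simp add: m_def avg_def)
  have "(norm (tilde X))\<^sup>2 = (\<Sum>i\<in>UNIV. (norm (X $ i - m))\<^sup>2)"
    by (simp add: power2_norm_vec tilde_def m_def)
  also have "\<dots> = (\<Sum>i\<in>UNIV. (norm (X $ i))\<^sup>2) - 2 * ((\<Sum>i\<in>UNIV. X $ i) \<bullet> m) + real CARD('n) * (norm m)\<^sup>2"
    by (simp add: power2_norm_eq_inner inner_diff_left inner_diff_right sum_subtractf
        sum.distrib inner_sum_left inner_sum_right inner_commute algebra_simps sum_distrib_left)
  also have "\<dots> = (\<Sum>i\<in>UNIV. (norm (X $ i))\<^sup>2) - real CARD('n) * (norm m)\<^sup>2"
    by (simp add: sum_eq power2_norm_eq_inner)
  finally show ?thesis by (simp add: power2_norm_vec)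
qed

text \<open>Young's inequality (u + v)^2 <= (1 + c) u^2 + (1 + 1/c) v^2 with c = (1 - r) / (2 r).\<close>

lemma young_contraction:
  fixes r u v :: real
  assumes "0 \<le> r" "r < 1"
  shows "r * (u + v)\<^sup>2 \<le> (1 + r) / 2 * u\<^sup>2 + 2 * r / (1 - r) * v\<^sup>2"
proof -
  have "2 * (1 - r) * ((1 + r) / 2 * u\<^sup>2 + 2 * r / (1 - r) * v\<^sup>2 - r * (u + v)\<^sup>2)
      = ((1 - r) * u - 2 * r * v)\<^sup>2 + 2 * r * (1 - r) * v\<^sup>2"
    using assms by (simp add: field_simps power2_eq_square)
  also have "\<dots> \<ge> 0"
    using assms by simp
  finally show ?thesis
    using assms by (simp add: zero_le_mult_iff)
qed

lemma power2_norm_add_le: "(norm (u + v))\<^sup>2 \<le> 2 * (norm u)\<^sup>2 + 2 * (norm (v :: 'a::real_normed_vector))\<^sup>2"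
proof -
  have "(norm (u + v))\<^sup>2 \<le> (norm u + norm v)\<^sup>2"
    by (intro power_mono norm_triangle_ineq) simp
  also have "\<dots> \<le> 2 * (norm u)\<^sup>2 + 2 * (norm v)\<^sup>2"
    using zero_le_power2[of "norm u - norm v"] by (simp add: power2_eq_square algebra_simps)
  finally show ?thesis .
qed

lemma power2_norm_diff_le: "(norm (u - v))\<^sup>2 \<le> 2 * (norm u)\<^sup>2 + 2 * (norm (v :: 'a::real_normed_vector))\<^sup>2"
  using power2_norm_add_le[of u "- v"] by simp

lemma power2_norm_lipschitz_le:
  assumes "\<And>x y. norm (f x - f y) \<le> L * norm (x - y)"
  shows "(norm (f x))\<^sup>2 \<le> 2 * (norm (f 0))\<^sup>2 + 2 * L\<^sup>2 * (norm x)\<^sup>2"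
proof -
  have "(norm (f x - f 0))\<^sup>2 \<le> (L * norm x)\<^sup>2"
    using assms[of x 0] by (intro power_mono) auto
  then show ?thesis
    using power2_norm_add_le[of "f x - f 0" "f 0"] by (simp add: power_mult_distrib)
qed

lemma power2_norm_tilde_mix_le:
  fixes X :: "'a::euclidean_space ^ 'n::finite"
  assumes "Jmat_absorbing A"
  shows "(norm (tilde (mix A X)))\<^sup>2 \<le> rho A * (norm (tilde X))\<^sup>2"
  unfolding tilde_mix[OF assms] rho_def by (rule power2_norm_mix_le)

lemma power2_norm_tilde_round_le:
  fixes X Y \<Delta> :: "'a::euclidean_space ^ 'n::finite"
  assumes A: "Jmat_absorbing A" and rho_lt_1: "rho A < 1"
  shows "(norm (tilde (mix A (X - \<gamma> *\<^sub>R (c *\<^sub>R Y + \<Delta>)))))\<^sup>2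
    \<le> (1 + rho A) / 2 * (norm (tilde X))\<^sup>2
      + 4 * \<gamma>\<^sup>2 * c\<^sup>2 * rho A / (1 - rho A) * (norm (tilde Y))\<^sup>2
      + 4 * \<gamma>\<^sup>2 * rho A / (1 - rho A) * (norm \<Delta>)\<^sup>2"
proof -
  define \<rho> where "\<rho> = rho A"
  have \<rho>: "0 \<le> \<rho>" "\<rho> < 1"
    using rho_lt_1 by (simp_all add: \<rho>_def rho_def)
  define u where "u = norm (tilde X)"
  define v where "v = norm (\<gamma> *\<^sub>R (c *\<^sub>R tilde Y + tilde \<Delta>))"
  have "(norm (tilde (mix A (X - \<gamma> *\<^sub>R (c *\<^sub>R Y + \<Delta>)))))\<^sup>2
      \<le> \<rho> * (norm (tilde (X - \<gamma> *\<^sub>R (c *\<^sub>R Y + \<Delta>))))\<^sup>2"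
    unfolding \<rho>_def by (rule power2_norm_tilde_mix_le[OF A])
  also have "norm (tilde (X - \<gamma> *\<^sub>R (c *\<^sub>R Y + \<Delta>))) \<le> u + v"
    unfolding u_def v_def tilde_diff tilde_scaleR tilde_add by (rule norm_triangle_ineq4)
  then have "\<rho> * (norm (tilde (X - \<gamma> *\<^sub>R (c *\<^sub>R Y + \<Delta>))))\<^sup>2 \<le> \<rho> * (u + v)\<^sup>2"
    using \<rho> by (intro mult_left_mono power_mono) auto
  also have "\<dots> \<le> (1 + \<rho>) / 2 * u\<^sup>2 + 2 * \<rho> / (1 - \<rho>) * v\<^sup>2"
    using \<rho> by (rule young_contraction)
  finally have young: "(norm (tilde (mix A (X - \<gamma> *\<^sub>R (c *\<^sub>R Y + \<Delta>)))))\<^sup>2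
      \<le> (1 + \<rho>) / 2 * u\<^sup>2 + 2 * \<rho> / (1 - \<rho>) * v\<^sup>2" .
  have "(norm (c *\<^sub>R tilde Y + tilde \<Delta>))\<^sup>2 \<le> 2 * c\<^sup>2 * (norm (tilde Y))\<^sup>2 + 2 * (norm \<Delta>)\<^sup>2"
  proof -
    have "(norm (c *\<^sub>R tilde Y))\<^sup>2 = c\<^sup>2 * (norm (tilde Y))\<^sup>2"
      by (simp add: power_mult_distrib)
    then show ?thesis
      using power2_norm_add_le[of "c *\<^sub>R tilde Y" "tilde \<Delta>"] power2_norm_tilde_le[of \<Delta>] by linarith
  qed
  then have "v\<^sup>2 \<le> \<gamma>\<^sup>2 * (2 * c\<^sup>2 * (norm (tilde Y))\<^sup>2 + 2 * (norm \<Delta>)\<^sup>2)"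
    by (simp add: v_def power_mult_distrib mult_left_mono)
  then have "2 * \<rho> / (1 - \<rho>) * v\<^sup>2 \<le> 2 * \<rho> / (1 - \<rho>) * (\<gamma>\<^sup>2 * (2 * c\<^sup>2 * (norm (tilde Y))\<^sup>2 + 2 * (norm \<Delta>)\<^sup>2))"
    using \<rho> by (intro mult_left_mono) auto
  moreover have "2 * \<rho> / (1 - \<rho>) * (\<gamma>\<^sup>2 * (2 * c\<^sup>2 * (norm (tilde Y))\<^sup>2 + 2 * (norm \<Delta>)\<^sup>2))
      = 4 * \<gamma>\<^sup>2 * c\<^sup>2 * \<rho> / (1 - \<rho>) * (norm (tilde Y))\<^sup>2 + 4 * \<gamma>\<^sup>2 * \<rho> / (1 - \<rho>) * (norm \<Delta>)\<^sup>2"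
    by (simp add: algebra_simps add_divide_distrib)
  ultimately show ?thesis
    using young by (simp add: u_def \<rho>_def)
qed

definition round_drift ::
  "('n::finite \<Rightarrow> 'a::real_vector \<Rightarrow> 's \<Rightarrow> 'a) \<Rightarrow> (nat \<Rightarrow> 'n \<Rightarrow> 'w \<Rightarrow> 's) \<Rightarrow> nat \<Rightarrow> nat \<Rightarrow> 'a ^ 'n \<Rightarrow> 'w \<Rightarrow> 'a ^ 'n"
  where "round_drift g \<xi> \<beta> t X \<omega> = (\<Sum>l<\<beta>. stoch_grad g \<xi> (t + l) X \<omega> - stoch_grad g \<xi> t X \<omega>)"

lemma flexgt_Suc_components:
  fixes Wb \<gamma> \<beta> g \<xi> x0 \<omega> m
  defines "X \<equiv> fst (flexgt Wb \<gamma> \<beta> g \<xi> x0 \<omega> m)"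
    and "Y \<equiv> fst (snd (flexgt Wb \<gamma> \<beta> g \<xi> x0 \<omega> m))"
    and "Z \<equiv> snd (snd (flexgt Wb \<gamma> \<beta> g \<xi> x0 \<omega> m))"
  shows "fst (flexgt Wb \<gamma> \<beta> g \<xi> x0 \<omega> (Suc m)) =
      (if Suc m mod \<beta> = 0 then mix Wb (X - \<gamma> *\<^sub>R Y) else X - \<gamma> *\<^sub>R Y)"
    and "fst (snd (flexgt Wb \<gamma> \<beta> g \<xi> x0 \<omega> (Suc m))) =
      (if Suc m mod \<beta> = 0
       then mix Wb (Y + stoch_grad g \<xi> (Suc m) (mix Wb (X - \<gamma> *\<^sub>R Y)) \<omega> - stoch_grad g \<xi> m Z \<omega>)
       else Y + stoch_grad g \<xi> (Suc m) Z \<omega> - stoch_grad g \<xi> m Z \<omega>)"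
    and "snd (snd (flexgt Wb \<gamma> \<beta> g \<xi> x0 \<omega> (Suc m))) =
      (if Suc m mod \<beta> = 0 then mix Wb (X - \<gamma> *\<^sub>R Y) else Z)"
  unfolding X_def Y_def Z_def
  by (cases "flexgt Wb \<gamma> \<beta> g \<xi> x0 \<omega> m"; simp add: Let_def)+

lemma flexgt_snapshot_at_round_start:
  "t mod \<beta> = 0 \<Longrightarrow> snd (snd (flexgt Wb \<gamma> \<beta> g \<xi> x0 \<omega> t)) = fst (flexgt Wb \<gamma> \<beta> g \<xi> x0 \<omega> t)"
  by (cases t) (simp_all add: flexgt_Suc_components del: flexgt.simps(2))

lemma flexgt_within_round:
  assumes start: "flexgt Wb \<gamma> \<beta> g \<xi> x0 \<omega> (\<beta> * k) = (X, Y, X)" and "j < \<beta>"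
  shows "flexgt Wb \<gamma> \<beta> g \<xi> x0 \<omega> (\<beta> * k + j) =
    (X - \<gamma> *\<^sub>R (\<Sum>l<j. Y + stoch_grad g \<xi> (\<beta> * k + l) X \<omega> - stoch_grad g \<xi> (\<beta> * k) X \<omega>),
     Y + stoch_grad g \<xi> (\<beta> * k + j) X \<omega> - stoch_grad g \<xi> (\<beta> * k) X \<omega>, X)"
  using \<open>j < \<beta>\<close>
proof (induction j)
  case 0
  then show ?case using start by simp
next
  case (Suc j)
  define G where "G l = stoch_grad g \<xi> (\<beta> * k + l) X \<omega>" for l
  have "Suc (\<beta> * k + j) mod \<beta> = Suc j"
    using Suc.prems by (simp add: mod_mult_self3 flip: add_Suc_right)
  then have "flexgt Wb \<gamma> \<beta> g \<xi> x0 \<omega> (\<beta> * k + Suc j) =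
     (X - \<gamma> *\<^sub>R (\<Sum>l<j. Y + G l - G 0) - \<gamma> *\<^sub>R (Y + G j - G 0), Y + G j - G 0 + G (Suc j) - G j, X)"
    using Suc by (simp add: G_def)
  also have "\<dots> = (X - \<gamma> *\<^sub>R (\<Sum>l<Suc j. Y + G l - G 0), Y + G (Suc j) - G 0, X)"
    by (simp add: scaleR_add_right diff_diff_add)
  finally show ?case by (simp add: G_def)
qed

lemma xs_round_end:
  fixes Wb \<gamma> \<beta> g \<xi> x0 k \<omega>
  assumes "\<beta> \<ge> 1"
  defines "X \<equiv> xs Wb \<gamma> \<beta> g \<xi> x0 (\<beta> * k) \<omega>" and "Y \<equiv> ys Wb \<gamma> \<beta> g \<xi> x0 (\<beta> * k) \<omega>"
  shows "xs Wb \<gamma> \<beta> g \<xi> x0 (\<beta> * (k + 1)) \<omega> = mix Wb (X - \<gamma> *\<^sub>R (real \<beta> *\<^sub>R Y + round_drift g \<xi> \<beta> (\<beta> * k) X \<omega>))"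
proof -
  define G where "G l = stoch_grad g \<xi> (\<beta> * k + l) X \<omega>" for l
  obtain b where b: "\<beta> = Suc b"
    using assms by (cases \<beta>) auto
  have "flexgt Wb \<gamma> \<beta> g \<xi> x0 \<omega> (\<beta> * k) = (X, Y, X)"
    using flexgt_snapshot_at_round_start[of "\<beta> * k" \<beta>] by (simp add: X_def Y_def xs_def ys_def prod_eq_iff)
  from flexgt_within_round[OF this, of b]
  have last_step: "flexgt Wb \<gamma> \<beta> g \<xi> x0 \<omega> (\<beta> * k + b) = (X - \<gamma> *\<^sub>R (\<Sum>l<b. Y + G l - G 0), Y + G b - G 0, X)"
    by (simp add: b G_def)
  have round_end: "\<beta> * (k + 1) = Suc (\<beta> * k + b)"
    by (simp add: b)
  then have "Suc (\<beta> * k + b) mod \<beta> = 0"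
    by (metis mod_mult_self1_is_0)
  then have "xs Wb \<gamma> \<beta> g \<xi> x0 (\<beta> * (k + 1)) \<omega>
      = mix Wb (X - \<gamma> *\<^sub>R (\<Sum>l<b. Y + G l - G 0) - \<gamma> *\<^sub>R (Y + G b - G 0))"
    unfolding xs_def round_end flexgt_Suc_components(1) last_step by simp
  also have "\<dots> = mix Wb (X - \<gamma> *\<^sub>R (\<Sum>l<\<beta>. Y + G l - G 0))"
    by (simp add: b scaleR_add_right diff_diff_add)
  also have "(\<Sum>l<\<beta>. Y + G l - G 0) = real \<beta> *\<^sub>R Y + round_drift g \<xi> \<beta> (\<beta> * k) X \<omega>"
    by (simp add: sum.distrib sum_constant_scaleR round_drift_def G_def flip: add_diff_eq)
  finally show ?thesis .
qed

lemma round_drift_component: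
  assumes "\<beta> \<ge> 1"
  shows "round_drift g \<xi> \<beta> t X \<omega> $ i
    = (\<Sum>l<\<beta>. (if l = 0 then 1 - real \<beta> else 1) *\<^sub>R (g i (X $ i) (\<xi> (t + l) i \<omega>) - c))"
proof -
  obtain b where b: "\<beta> = Suc b"
    using assms by (cases \<beta>) auto
  have "round_drift g \<xi> \<beta> t X \<omega> $ i = (\<Sum>l<\<beta>. (g i (X $ i) (\<xi> (t + l) i \<omega>) - c) - (g i (X $ i) (\<xi> t i \<omega>) - c))"
    by (simp add: round_drift_def stoch_grad_def)
  also have "\<dots> = (\<Sum>l<\<beta>. (if l = 0 then 1 - real \<beta> else 1) *\<^sub>R (g i (X $ i) (\<xi> (t + l) i \<omega>) - c))"
    unfolding b sum.lessThan_Suc_shift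
    by (simp add: sum_subtractf sum_constant_scaleR algebra_simps)
  finally show ?thesis .
qed

lemma borel_measurable_vec_lambda:
  fixes f :: "'n::finite \<Rightarrow> 'w \<Rightarrow> 'a::euclidean_space"
  assumes "\<And>i. f i \<in> borel_measurable N"
  shows "(\<lambda>\<omega>. \<chi> i. f i \<omega>) \<in> borel_measurable N"
proof -
  have "continuous_on UNIV (\<lambda>x. if j = i then x else (0 :: 'a))" for i j :: 'n
    by (cases "j = i") simp_all
  then have axis: "continuous_on UNIV (axis i :: 'a \<Rightarrow> 'a ^ 'n)" for i
    unfolding axis_def by (rule continuous_on_vec_lambda)
  have "(\<lambda>\<omega>. \<Sum>i\<in>UNIV. axis i (f i \<omega>)) \<in> borel_measurable N"
    by (intro borel_measurable_sum borel_measurable_continuous_on[OF axis] assms)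
  also have "(\<lambda>\<omega>. \<Sum>i\<in>UNIV. axis i (f i \<omega>)) = (\<lambda>\<omega>. \<chi> i. f i \<omega>)"
    by (simp add: fun_eq_iff vec_eq_iff sum_component axis_def)
  finally show ?thesis .
qed

lemma borel_measurable_vec_nth [measurable]:
  fixes f :: "'w \<Rightarrow> 'a::euclidean_space ^ 'n::finite"
  assumes "f \<in> borel_measurable N"
  shows "(\<lambda>\<omega>. f \<omega> $ i) \<in> borel_measurable N"
  by (intro borel_measurable_continuous_on[OF _ assms] continuous_intros)

lemma borel_measurable_mix [measurable]:
  fixes X :: "'w \<Rightarrow> 'a::euclidean_space ^ 'n::finite"
  assumes "X \<in> borel_measurable N"
  shows "(\<lambda>\<omega>. mix A (X \<omega>)) \<in> borel_measurable N"
  unfolding mix_def using assms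
  by (intro borel_measurable_vec_lambda borel_measurable_sum borel_measurable_scaleR borel_measurable_vec_nth) auto

lemma borel_measurable_stoch_grad:
  fixes Z :: "'w \<Rightarrow> 'a::euclidean_space ^ 'n::finite"
  assumes Z: "Z \<in> borel_measurable N" and \<xi>: "\<And>i. \<xi> t i \<in> measurable N (D i)"
    and g: "\<And>i. (\<lambda>(x, s). g i x s) \<in> borel_measurable (borel \<Otimes>\<^sub>M D i)"
  shows "(\<lambda>\<omega>. stoch_grad g \<xi> t (Z \<omega>) \<omega>) \<in> borel_measurable N"
  unfolding stoch_grad_def
proof (intro borel_measurable_vec_lambda)
  fix i
  have "(\<lambda>\<omega>. (Z \<omega> $ i, \<xi> t i \<omega>)) \<in> measurable N (borel \<Otimes>\<^sub>M D i)"
    using Z \<xi> by (intro measurable_Pair borel_measurable_vec_nth) auto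
  from measurable_comp[OF this g] show "(\<lambda>\<omega>. g i (Z \<omega> $ i) (\<xi> t i \<omega>)) \<in> borel_measurable N"
    by (simp add: comp_def)
qed

lemma borel_measurable_flexgt:
  fixes x0 :: "'a::euclidean_space ^ 'n::finite"
  assumes \<xi>: "\<And>s i. s \<le> m \<Longrightarrow> \<xi> s i \<in> measurable N (D i)"
    and g: "\<And>i. (\<lambda>(x, s). g i x s) \<in> borel_measurable (borel \<Otimes>\<^sub>M D i)"
  shows "(\<lambda>\<omega>. fst (flexgt Wb \<gamma> \<beta> g \<xi> x0 \<omega> m)) \<in> borel_measurable N"
    and "(\<lambda>\<omega>. fst (snd (flexgt Wb \<gamma> \<beta> g \<xi> x0 \<omega> m))) \<in> borel_measurable N"
    and "(\<lambda>\<omega>. snd (snd (flexgt Wb \<gamma> \<beta> g \<xi> x0 \<omega> m))) \<in> borel_measurable N"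
  using \<xi> unfolding atomize_conj
proof (induction m)
  case 0
  then show ?case
    by (simp add: borel_measurable_stoch_grad[OF _ _ g])
next
  case (Suc m)
  then have IH: "(\<lambda>\<omega>. fst (flexgt Wb \<gamma> \<beta> g \<xi> x0 \<omega> m)) \<in> borel_measurable N"
      "(\<lambda>\<omega>. fst (snd (flexgt Wb \<gamma> \<beta> g \<xi> x0 \<omega> m))) \<in> borel_measurable N"
      "(\<lambda>\<omega>. snd (snd (flexgt Wb \<gamma> \<beta> g \<xi> x0 \<omega> m))) \<in> borel_measurable N"
    by auto
  have grad: "(\<lambda>\<omega>. stoch_grad g \<xi> t (Z \<omega>) \<omega>) \<in> borel_measurable N"
    if "t \<le> Suc m" "Z \<in> borel_measurable N" for t and Z :: "_ \<Rightarrow> 'a ^ 'n"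
    using Suc.prems that by (intro borel_measurable_stoch_grad[OF _ _ g]) auto
  show ?case
  proof (cases "Suc m mod \<beta> = 0")
    case True
    show ?thesis
      unfolding flexgt_Suc_components if_P[OF True] using IH
      by (intro conjI grad borel_measurable_add borel_measurable_diff borel_measurable_mix
          borel_measurable_scaleR) auto
  next
    case False
    show ?thesis
      unfolding flexgt_Suc_components if_not_P[OF False] using IH
      by (intro conjI grad borel_measurable_add borel_measurable_diff borel_measurable_scaleR) auto
  qed
qed

lemma borel_measurable_flexgt_xz:
  fixes x0 :: "'a::euclidean_space ^ 'n::finite"
  assumes \<xi>: "\<And>s i. s < m \<Longrightarrow> \<xi> s i \<in> measurable N (D i)"
    and g: "\<And>i. (\<lambda>(x, s). g i x s) \<in> borel_measurable (borel \<Otimes>\<^sub>M D i)"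
  shows "(\<lambda>\<omega>. fst (flexgt Wb \<gamma> \<beta> g \<xi> x0 \<omega> m)) \<in> borel_measurable N \<and>
    (\<lambda>\<omega>. snd (snd (flexgt Wb \<gamma> \<beta> g \<xi> x0 \<omega> m))) \<in> borel_measurable N"
proof (cases m)
  case (Suc m')
  then have IH: "(\<lambda>\<omega>. fst (flexgt Wb \<gamma> \<beta> g \<xi> x0 \<omega> m')) \<in> borel_measurable N"
      "(\<lambda>\<omega>. fst (snd (flexgt Wb \<gamma> \<beta> g \<xi> x0 \<omega> m'))) \<in> borel_measurable N"
      "(\<lambda>\<omega>. snd (snd (flexgt Wb \<gamma> \<beta> g \<xi> x0 \<omega> m'))) \<in> borel_measurable N"
    using borel_measurable_flexgt[of m' \<xi> N D g] \<xi> g by auto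
  show ?thesis
    unfolding Suc flexgt_Suc_components using IH
    by (cases "Suc m' mod \<beta> = 0") (auto simp del: flexgt.simps)
qed simp

lemma flexgt_cong_samples:
  assumes "\<And>s i. s \<le> m \<Longrightarrow> \<xi> s i \<omega> = \<xi>' s i \<omega>'"
  shows "flexgt Wb \<gamma> \<beta> g \<xi> x0 \<omega> m = flexgt Wb \<gamma> \<beta> g \<xi>' x0 \<omega>' m"
  using assms
proof (induction m)
  case 0
  then show ?case by (simp add: stoch_grad_def)
next
  case (Suc m)
  have IH: "flexgt Wb \<gamma> \<beta> g \<xi> x0 \<omega> m = flexgt Wb \<gamma> \<beta> g \<xi>' x0 \<omega>' m"
    using Suc by auto
  have "stoch_grad g \<xi> s Z \<omega> = stoch_grad g \<xi>' s Z \<omega>'" if "s \<le> Suc m" for s Z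
    using Suc.prems that by (simp add: stoch_grad_def)
  then show ?case by (simp add: IH split: prod.split)
qed

lemma flexgt_xz_cong_samples:
  assumes "\<And>s i. s < m \<Longrightarrow> \<xi> s i \<omega> = \<xi>' s i \<omega>'"
  shows "fst (flexgt Wb \<gamma> \<beta> g \<xi> x0 \<omega> m) = fst (flexgt Wb \<gamma> \<beta> g \<xi>' x0 \<omega>' m) \<and>
    snd (snd (flexgt Wb \<gamma> \<beta> g \<xi> x0 \<omega> m)) = snd (snd (flexgt Wb \<gamma> \<beta> g \<xi>' x0 \<omega>' m))"
proof (cases m)
  case (Suc m')
  then have "flexgt Wb \<gamma> \<beta> g \<xi> x0 \<omega> m' = flexgt Wb \<gamma> \<beta> g \<xi>' x0 \<omega>' m'"
    using assms by (intro flexgt_cong_samples) auto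
  then show ?thesis
    unfolding Suc flexgt_Suc_components by simp
qed simp

lemma second_moment_scaled_noise_le:
  fixes h :: "'s \<Rightarrow> 'a::euclidean_space"
  assumes "prob_space D" and h: "integrable D h" and mean: "(\<integral>s. h s \<partial>D) = m"
    and var_int: "integrable D (\<lambda>s. (norm (h s - m))\<^sup>2)" and var: "(\<integral>s. (norm (h s - m))\<^sup>2 \<partial>D) \<le> v"
  shows "(\<integral>\<^sup>+s. ennreal ((norm (a *\<^sub>R (h s - m) + c))\<^sup>2) \<partial>D) \<le> ennreal (a\<^sup>2 * v + (norm c)\<^sup>2)"
proof -
  interpret D: prob_space D by fact
  have centered: "integrable D (\<lambda>s. h s - m)" "(\<integral>s. h s - m \<partial>D) = 0"
    using h mean by (simp_all add: D.prob_space)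
  have expand: "(norm (a *\<^sub>R (h s - m) + c))\<^sup>2
      = a\<^sup>2 * (norm (h s - m))\<^sup>2 + 2 * a * ((h s - m) \<bullet> c) + (norm c)\<^sup>2" for s
    unfolding power2_norm_eq_inner
    by (simp add: inner_add_left inner_add_right inner_commute power2_eq_square algebra_simps)
  have int: "integrable D (\<lambda>s. a\<^sup>2 * (norm (h s - m))\<^sup>2 + 2 * a * ((h s - m) \<bullet> c) + (norm c)\<^sup>2)"
    using var_int centered by (intro Bochner_Integration.integrable_add integrable_mult_right integrable_inner_left) auto
  have "(\<integral>\<^sup>+s. ennreal ((norm (a *\<^sub>R (h s - m) + c))\<^sup>2) \<partial>D)
      = ennreal (\<integral>s. a\<^sup>2 * (norm (h s - m))\<^sup>2 + 2 * a * ((h s - m) \<bullet> c) + (norm c)\<^sup>2 \<partial>D)"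
    unfolding expand using int by (intro nn_integral_eq_integral) (auto simp flip: expand)
  also have "(\<integral>s. a\<^sup>2 * (norm (h s - m))\<^sup>2 + 2 * a * ((h s - m) \<bullet> c) + (norm c)\<^sup>2 \<partial>D)
      = a\<^sup>2 * (\<integral>s. (norm (h s - m))\<^sup>2 \<partial>D) + 2 * a * ((\<integral>s. h s - m \<partial>D) \<bullet> c) + (norm c)\<^sup>2"
    using var_int centered
    by (simp add: Bochner_Integration.integral_add integrable_mult_right integrable_inner_left D.prob_space)
  also have "\<dots> \<le> a\<^sup>2 * v + (norm c)\<^sup>2"
    using var centered by (simp add: mult_left_mono)
  finally show ?thesis
    by (simp add: ennreal_leI)
qed

lemma (in prob_space) nn_integral_indep_var:
  assumes indep: "indep_var S U T W" and h: "h \<in> borel_measurable (S \<Otimes>\<^sub>M T)"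
  shows "(\<integral>\<^sup>+\<omega>. h (U \<omega>, W \<omega>) \<partial>M) = (\<integral>\<^sup>+u. \<integral>\<^sup>+w. h (u, w) \<partial>distr M T W \<partial>distr M S U)"
proof -
  have U: "U \<in> measurable M S" and W: "W \<in> measurable M T"
    and product: "distr M S U \<Otimes>\<^sub>M distr M T W = distr M (S \<Otimes>\<^sub>M T) (\<lambda>\<omega>. (U \<omega>, W \<omega>))"
    using indep unfolding indep_var_distribution_eq by auto
  interpret W: prob_space "distr M T W"
    using W by (rule prob_space_distr)
  have "(\<integral>\<^sup>+\<omega>. h (U \<omega>, W \<omega>) \<partial>M) = integral\<^sup>N (distr M S U \<Otimes>\<^sub>M distr M T W) h"
    using U W h by (simp add: product nn_integral_distr measurable_Pair)
  also have "\<dots> = (\<integral>\<^sup>+u. \<integral>\<^sup>+w. h (u, w) \<partial>distr M T W \<partial>distr M S U)"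
    using h by (subst W.nn_integral_fst[symmetric]) (auto cong: measurable_cong_sets)
  finally show ?thesis .
qed

lemma (in prob_space) indep_noise_second_moment_le:
  fixes g :: "'b::topological_space \<Rightarrow> 's \<Rightarrow> 'v::euclidean_space" and \<Psi> :: "'u \<Rightarrow> 'v"
  assumes D: "prob_space D" and indep: "indep_var S U T W"
    and sample: "sample \<in> measurable T D" and law: "distr M D (\<lambda>\<omega>. sample (W \<omega>)) = D"
    and \<Phi>: "\<Phi> \<in> borel_measurable S" and \<Psi>: "\<Psi> \<in> borel_measurable S"
    and g: "(\<lambda>(x, s). g x s) \<in> borel_measurable (borel \<Otimes>\<^sub>M D)" and mean: "m \<in> borel_measurable borel"
    and unbiased: "\<And>x. integrable D (g x) \<and> (\<integral>s. g x s \<partial>D) = m x"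
    and var_int: "\<And>x. integrable D (\<lambda>s. (norm (g x s - m x))\<^sup>2)"
    and var: "\<And>x. (\<integral>s. (norm (g x s - m x))\<^sup>2 \<partial>D) \<le> v"
  shows "(\<integral>\<^sup>+\<omega>. ennreal ((norm (a *\<^sub>R (g (\<Phi> (U \<omega>)) (sample (W \<omega>)) - m (\<Phi> (U \<omega>))) + \<Psi> (U \<omega>)))\<^sup>2) \<partial>M)
    \<le> ennreal (a\<^sup>2 * v) + (\<integral>\<^sup>+\<omega>. ennreal ((norm (\<Psi> (U \<omega>)))\<^sup>2) \<partial>M)"
proof -
  have U: "U \<in> measurable M S" and W: "W \<in> measurable M T"
    using indep unfolding indep_var_distribution_eq by auto
  interpret U: prob_space "distr M S U"
    using U by (rule prob_space_distr)
  have "0 \<le> v"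
    by (rule order_trans[OF Bochner_Integration.integral_nonneg var]) simp
  define h where "h p = ennreal ((norm (a *\<^sub>R (g (\<Phi> (fst p)) (snd p) - m (\<Phi> (fst p))) + \<Psi> (fst p)))\<^sup>2)" for p
  have "(\<lambda>p. g (\<Phi> (fst p)) (snd p)) \<in> borel_measurable (S \<Otimes>\<^sub>M D)"
    using measurable_comp[of "\<lambda>p. (\<Phi> (fst p), snd p)" _ "borel \<Otimes>\<^sub>M D", OF _ g] \<Phi> by (simp add: comp_def)
  then have h: "h \<in> borel_measurable (S \<Otimes>\<^sub>M D)"
    unfolding h_def using \<Phi> \<Psi> mean by measurable
  have "(\<lambda>p. (fst p, sample (snd p))) \<in> measurable (S \<Otimes>\<^sub>M T) (S \<Otimes>\<^sub>M D)"
    using sample by measurable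
  from measurable_comp[OF this h]
  have h_sample: "(\<lambda>p. h (fst p, sample (snd p))) \<in> borel_measurable (S \<Otimes>\<^sub>M T)"
    by (simp add: comp_def)
  have "(\<integral>\<^sup>+\<omega>. h (U \<omega>, sample (W \<omega>)) \<partial>M) = (\<integral>\<^sup>+u. \<integral>\<^sup>+w. h (u, sample w) \<partial>distr M T W \<partial>distr M S U)"
    using nn_integral_indep_var[OF indep h_sample] by simp
  also have "\<dots> = (\<integral>\<^sup>+u. \<integral>\<^sup>+s. h (u, s) \<partial>D \<partial>distr M S U)"
  proof (intro nn_integral_cong)
    fix u assume "u \<in> space (distr M S U)"
    then have "u \<in> space S"
      by simp
    then have h_u: "(\<lambda>s. h (u, s)) \<in> borel_measurable D"
      using h by measurable
    have "(\<integral>\<^sup>+w. h (u, sample w) \<partial>distr M T W) = (\<integral>\<^sup>+\<omega>. h (u, sample (W \<omega>)) \<partial>M)"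
      using W h_u sample by (subst nn_integral_distr) auto
    also have "\<dots> = (\<integral>\<^sup>+s. h (u, s) \<partial>distr M D (\<lambda>\<omega>. sample (W \<omega>)))"
      using W h_u sample by (subst nn_integral_distr) auto
    finally show "(\<integral>\<^sup>+w. h (u, sample w) \<partial>distr M T W) = (\<integral>\<^sup>+s. h (u, s) \<partial>D)"
      by (simp only: law)
  qed
  also have "\<dots> \<le> (\<integral>\<^sup>+u. ennreal (a\<^sup>2 * v) + ennreal ((norm (\<Psi> u))\<^sup>2) \<partial>distr M S U)"
  proof (intro nn_integral_mono)
    fix u
    have "(\<integral>\<^sup>+s. h (u, s) \<partial>D) \<le> ennreal (a\<^sup>2 * v + (norm (\<Psi> u))\<^sup>2)"
      unfolding h_def fst_conv snd_conv
      using unbiased var_int var by (intro second_moment_scaled_noise_le[OF D]) auto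
    then show "(\<integral>\<^sup>+s. h (u, s) \<partial>D) \<le> ennreal (a\<^sup>2 * v) + ennreal ((norm (\<Psi> u))\<^sup>2)"
      using \<open>0 \<le> v\<close> by (simp add: ennreal_plus)
  qed
  also have "\<dots> = ennreal (a\<^sup>2 * v) + (\<integral>\<^sup>+\<omega>. ennreal ((norm (\<Psi> (U \<omega>)))\<^sup>2) \<partial>M)"
    using U \<Psi> U.emeasure_space_1 by (simp add: nn_integral_add nn_integral_distr)
  finally show ?thesis
    by (simp add: h_def)
qed

text \<open>A Bochner integral of a non-integrable function is 0, so the iterates must be shown to have
  finite second moments before the pointwise one-round bound can be integrated.\<close>

definition square_integrable :: "'w measure \<Rightarrow> ('w \<Rightarrow> 'b::real_normed_vector) \<Rightarrow> bool" where
  "square_integrable N f \<longleftrightarrow> f \<in> borel_measurable N \<and> (\<integral>\<^sup>+\<omega>. ennreal ((norm (f \<omega>))\<^sup>2) \<partial>N) < \<infinity>"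

lemma square_integrable_measurable: "square_integrable N f \<Longrightarrow> f \<in> borel_measurable N"
  by (simp add: square_integrable_def)

lemma square_integrable_dominated:
  fixes f1 :: "'w \<Rightarrow> 'b::real_normed_vector" and f2 :: "'w \<Rightarrow> 'c::real_normed_vector"
    and h :: "'w \<Rightarrow> 'd::real_normed_vector"
  assumes "finite_measure N" and f1: "square_integrable N f1" and f2: "square_integrable N f2"
    and h: "h \<in> borel_measurable N" and "0 \<le> a" "0 \<le> b" "0 \<le> c"
    and bound: "\<And>\<omega>. \<omega> \<in> space N \<Longrightarrow> (norm (h \<omega>))\<^sup>2 \<le> a * (norm (f1 \<omega>))\<^sup>2 + b * (norm (f2 \<omega>))\<^sup>2 + c"
  shows "square_integrable N h"
proof -
  interpret N: finite_measure N by fact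
  have "f1 \<in> borel_measurable N" "f2 \<in> borel_measurable N"
    using f1 f2 by (simp_all add: square_integrable_def)
  have "(\<integral>\<^sup>+\<omega>. ennreal ((norm (h \<omega>))\<^sup>2) \<partial>N)
      \<le> (\<integral>\<^sup>+\<omega>. ennreal a * ennreal ((norm (f1 \<omega>))\<^sup>2) + ennreal b * ennreal ((norm (f2 \<omega>))\<^sup>2) + ennreal c \<partial>N)"
  proof (intro nn_integral_mono)
    fix \<omega> assume "\<omega> \<in> space N"
    then have "ennreal ((norm (h \<omega>))\<^sup>2) \<le> ennreal (a * (norm (f1 \<omega>))\<^sup>2 + b * (norm (f2 \<omega>))\<^sup>2 + c)"
      using bound by (intro ennreal_leI) auto
    also have "\<dots> = ennreal a * ennreal ((norm (f1 \<omega>))\<^sup>2) + ennreal b * ennreal ((norm (f2 \<omega>))\<^sup>2) + ennreal c"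
      using \<open>0 \<le> a\<close> \<open>0 \<le> b\<close> \<open>0 \<le> c\<close> by (simp add: ennreal_mult)
    finally show "ennreal ((norm (h \<omega>))\<^sup>2)
        \<le> ennreal a * ennreal ((norm (f1 \<omega>))\<^sup>2) + ennreal b * ennreal ((norm (f2 \<omega>))\<^sup>2) + ennreal c" .
  qed
  also have "\<dots> = ennreal a * (\<integral>\<^sup>+\<omega>. ennreal ((norm (f1 \<omega>))\<^sup>2) \<partial>N)
      + ennreal b * (\<integral>\<^sup>+\<omega>. ennreal ((norm (f2 \<omega>))\<^sup>2) \<partial>N) + ennreal c * emeasure N (space N)"
    using \<open>f1 \<in> borel_measurable N\<close> \<open>f2 \<in> borel_measurable N\<close> by (simp add: nn_integral_add nn_integral_cmult)
  also have "\<dots> < \<infinity>"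
    using f1 f2 N.emeasure_finite[of "space N"]
    by (simp add: square_integrable_def ennreal_mult_eq_top_iff less_top[symmetric])
  finally show ?thesis
    using h by (simp add: square_integrable_def)
qed

lemma square_integrable_const: "finite_measure N \<Longrightarrow> square_integrable N (\<lambda>\<omega>. c)"
  by (rule square_integrable_dominated[of N "\<lambda>_. 0::real" "\<lambda>_. 0::real" _ 0 0 "(norm c)\<^sup>2"])
     (simp_all add: square_integrable_def)

lemma square_integrable_add:
  fixes f1 f2 :: "'w \<Rightarrow> 'b::{real_normed_vector, second_countable_topology}"
  assumes N: "finite_measure N" and f1: "square_integrable N f1" and f2: "square_integrable N f2"
  shows "square_integrable N (\<lambda>\<omega>. f1 \<omega> + f2 \<omega>)"
proof (rule square_integrable_dominated[OF N f1 f2, of _ 2 2 0])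
  show "(\<lambda>\<omega>. f1 \<omega> + f2 \<omega>) \<in> borel_measurable N"
    using square_integrable_measurable[OF f1] square_integrable_measurable[OF f2] by simp
qed (simp_all add: power2_norm_add_le)

lemma square_integrable_diff:
  fixes f1 f2 :: "'w \<Rightarrow> 'b::{real_normed_vector, second_countable_topology}"
  assumes N: "finite_measure N" and f1: "square_integrable N f1" and f2: "square_integrable N f2"
  shows "square_integrable N (\<lambda>\<omega>. f1 \<omega> - f2 \<omega>)"
proof (rule square_integrable_dominated[OF N f1 f2, of _ 2 2 0])
  show "(\<lambda>\<omega>. f1 \<omega> - f2 \<omega>) \<in> borel_measurable N"
    using square_integrable_measurable[OF f1] square_integrable_measurable[OF f2] by simp
qed (simp_all add: power2_norm_diff_le)

lemma square_integrable_scaleR: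
  fixes f :: "'w \<Rightarrow> 'b::{real_normed_vector, second_countable_topology}"
  assumes N: "finite_measure N" and f: "square_integrable N f"
  shows "square_integrable N (\<lambda>\<omega>. c *\<^sub>R f \<omega>)"
proof (rule square_integrable_dominated[OF N f f, of _ "c\<^sup>2" 0 0])
  show "(\<lambda>\<omega>. c *\<^sub>R f \<omega>) \<in> borel_measurable N"
    using square_integrable_measurable[OF f] by simp
qed (simp_all add: power_mult_distrib)

lemma square_integrable_mix:
  fixes f :: "'w \<Rightarrow> 'a::euclidean_space ^ 'n::finite"
  assumes N: "finite_measure N" and f: "square_integrable N f"
  shows "square_integrable N (\<lambda>\<omega>. mix A (f \<omega>))"
proof (rule square_integrable_dominated[OF N f f, of _ "(spec_norm A)\<^sup>2" 0 0])
  show "(\<lambda>\<omega>. mix A (f \<omega>)) \<in> borel_measurable N"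
    using square_integrable_measurable[OF f] by (rule borel_measurable_mix)
qed (simp_all add: power2_norm_mix_le)

lemma square_integrable_tilde:
  fixes f :: "'w \<Rightarrow> 'a::euclidean_space ^ 'n::finite"
  assumes N: "finite_measure N" and f: "square_integrable N f"
  shows "square_integrable N (\<lambda>\<omega>. tilde (f \<omega>))"
proof (rule square_integrable_dominated[OF N f f, of _ 1 0 0])
  show "(\<lambda>\<omega>. tilde (f \<omega>)) \<in> borel_measurable N"
    unfolding tilde_eq_mix_Jmat using square_integrable_measurable[OF f] by simp
qed (simp_all add: power2_norm_tilde_le)

lemma nn_integral_power2_norm_vec:
  fixes f :: "'w \<Rightarrow> 'a::euclidean_space ^ 'n::finite"
  assumes "f \<in> borel_measurable N"
  shows "(\<integral>\<^sup>+\<omega>. ennreal ((norm (f \<omega>))\<^sup>2) \<partial>N) = (\<Sum>i\<in>UNIV. \<integral>\<^sup>+\<omega>. ennreal ((norm (f \<omega> $ i))\<^sup>2) \<partial>N)"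
  using assms by (simp add: power2_norm_vec nn_integral_sum flip: sum_ennreal)

lemma square_integrable_vec:
  fixes f :: "'w \<Rightarrow> 'a::euclidean_space ^ 'n::finite"
  assumes f: "f \<in> borel_measurable N"
    and components: "\<And>i. (\<integral>\<^sup>+\<omega>. ennreal ((norm (f \<omega> $ i))\<^sup>2) \<partial>N) < \<infinity>"
  shows "square_integrable N f"
proof -
  have "(\<integral>\<^sup>+\<omega>. ennreal ((norm (f \<omega>))\<^sup>2) \<partial>N) = (\<Sum>i\<in>UNIV. \<integral>\<^sup>+\<omega>. ennreal ((norm (f \<omega> $ i))\<^sup>2) \<partial>N)"
    by (rule nn_integral_power2_norm_vec[OF f])
  also have "\<dots> < \<infinity>"
    using components by (simp add: ennreal_sum_less_top less_top[symmetric])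
  finally show ?thesis
    using f by (simp add: square_integrable_def)
qed

lemma integrable_power2_norm:
  "square_integrable N f \<Longrightarrow> integrable N (\<lambda>\<omega>. (norm (f \<omega>))\<^sup>2)"
  by (intro integrableI_nonneg) (auto simp: square_integrable_def)

locale flexgt_sampling =
  fixes M :: "'w measure" and D :: "'n::finite \<Rightarrow> 's measure" and \<xi> :: "nat \<Rightarrow> 'n \<Rightarrow> 'w \<Rightarrow> 's"
    and g :: "'n \<Rightarrow> 'a::euclidean_space \<Rightarrow> 's \<Rightarrow> 'a" and grad :: "'n \<Rightarrow> 'a \<Rightarrow> 'a"
    and Wb :: "real ^ 'n ^ 'n" and x0 :: "'a ^ 'n" and L \<sigma> \<gamma> :: real and \<beta> :: nat
  assumes prob_space_M: "prob_space M" and D: "\<And>i. prob_space (D i)"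
    and xi_meas: "\<And>t i. \<xi> t i \<in> measurable M (D i)"
    and xi_distr: "\<And>t i. distr M (D i) (\<xi> t i) = D i"
    and xi_indep: "prob_space.indep_vars M (\<lambda>(t, i). D i) (\<lambda>(t, i). \<xi> t i) UNIV"
    and g_meas: "\<And>i. (\<lambda>(x, s). g i x s) \<in> borel_measurable (borel \<Otimes>\<^sub>M D i)"
    and unbiased: "\<And>i x. integrable (D i) (g i x) \<and> (\<integral>s. g i x s \<partial>D i) = grad i x"
    and smooth: "\<And>i x y. norm (grad i x - grad i y) \<le> L * norm (x - y)"
    and var_int: "\<And>i x. integrable (D i) (\<lambda>s. (norm (g i x s - grad i x))\<^sup>2)"
    and var: "\<And>i x. (\<integral>s. (norm (g i x s - grad i x))\<^sup>2 \<partial>D i) \<le> \<sigma>\<^sup>2"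
    and L_pos: "L > 0"
begin

sublocale prob_space M
  by (rule prob_space_M)

abbreviation "xt t \<equiv> xs Wb \<gamma> \<beta> g \<xi> x0 t"
abbreviation "yt t \<equiv> ys Wb \<gamma> \<beta> g \<xi> x0 t"
abbreviation "zt t \<omega> \<equiv> snd (snd (flexgt Wb \<gamma> \<beta> g \<xi> x0 \<omega> t))"

lemma borel_measurable_iterates:
  "xt t \<in> borel_measurable M" "yt t \<in> borel_measurable M" "zt t \<in> borel_measurable M"
  using borel_measurable_flexgt[of t \<xi> M D g Wb \<gamma> \<beta> x0] xi_meas g_meas
  by (simp_all add: xs_def[abs_def] ys_def[abs_def])

lemma borel_measurable_grad: "grad i \<in> borel_measurable borel"
proof -
  have "L-lipschitz_on UNIV (grad i)"
    using smooth L_pos by (intro lipschitz_onI) (auto simp: dist_norm)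
  then show ?thesis
    by (intro borel_measurable_continuous_onI lipschitz_on_continuous_on)
qed

text \<open>Conditioning on the past is expressed without conditional expectations: quantities known
  at time t factor through the restriction of the sample path to earlier times, and this
  restriction is independent of every fresh sample.\<close>

definition past :: "nat \<Rightarrow> (nat \<times> 'n) set" where
  "past t = {..<t} \<times> UNIV"

definition past_space :: "nat \<Rightarrow> (nat \<times> 'n \<Rightarrow> 's) measure" where
  "past_space t = PiM (past t) (\<lambda>(s, i). D i)"

definition past_samples :: "nat \<Rightarrow> 'w \<Rightarrow> nat \<times> 'n \<Rightarrow> 's" where
  "past_samples t \<omega> = restrict (\<lambda>j. case_prod \<xi> j \<omega>) (past t)"

definition x_of_past :: "nat \<Rightarrow> (nat \<times> 'n \<Rightarrow> 's) \<Rightarrow> 'a ^ 'n" where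
  "x_of_past t \<zeta> = fst (flexgt Wb \<gamma> \<beta> g (\<lambda>s i \<zeta>. \<zeta> (s, i)) x0 \<zeta> t)"

definition z_of_past :: "nat \<Rightarrow> (nat \<times> 'n \<Rightarrow> 's) \<Rightarrow> 'a ^ 'n" where
  "z_of_past t \<zeta> = snd (snd (flexgt Wb \<gamma> \<beta> g (\<lambda>s i \<zeta>. \<zeta> (s, i)) x0 \<zeta> t))"

lemma past_samples_apply: "s < t \<Longrightarrow> past_samples t \<omega> (s, i) = \<xi> s i \<omega>"
  by (simp add: past_samples_def past_def)

lemma measurable_past_component: "s < t \<Longrightarrow> (\<lambda>\<zeta>. \<zeta> (s, i)) \<in> measurable (past_space t) (D i)"
  using measurable_component_singleton[of "(s, i)" "past t" "\<lambda>(s, i). D i"]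
  by (simp add: past_space_def past_def)

lemma iterates_eq_of_past:
  assumes "m \<le> t"
  shows "xt m \<omega> = x_of_past m (past_samples t \<omega>)" "zt m \<omega> = z_of_past m (past_samples t \<omega>)"
  using flexgt_xz_cong_samples[of m \<xi> \<omega> "\<lambda>s i \<zeta>. \<zeta> (s, i)" "past_samples t \<omega>" Wb \<gamma> \<beta> g x0] assms
  by (auto simp: past_samples_apply xs_def x_of_past_def z_of_past_def)

lemma borel_measurable_of_past:
  assumes "m \<le> t"
  shows "x_of_past m \<in> borel_measurable (past_space t)" "z_of_past m \<in> borel_measurable (past_space t)"
  using borel_measurable_flexgt_xz[of m "\<lambda>s i \<zeta>. \<zeta> (s, i)" "past_space t" D g Wb \<gamma> \<beta> x0] assms
    measurable_past_component g_meas
  by (auto simp: x_of_past_def[abs_def] z_of_past_def[abs_def])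

lemma borel_measurable_g_of_past:
  assumes \<Phi>: "\<Phi> \<in> borel_measurable (past_space t)" and "s < t"
  shows "(\<lambda>\<zeta>. g i (\<Phi> \<zeta>) (\<zeta> (s, i))) \<in> borel_measurable (past_space t)"
proof -
  have "(\<lambda>\<zeta>. (\<Phi> \<zeta>, \<zeta> (s, i))) \<in> measurable (past_space t) (borel \<Otimes>\<^sub>M D i)"
    using \<Phi> measurable_past_component[OF \<open>s < t\<close>] by (intro measurable_Pair) auto
  from measurable_comp[OF this g_meas[of i]] show ?thesis
    by (simp add: comp_def)
qed

lemma fresh_noise_second_moment_le:
  assumes \<Phi>: "\<Phi> \<in> borel_measurable (past_space t)" and \<Psi>: "\<Psi> \<in> borel_measurable (past_space t)"
  shows "(\<integral>\<^sup>+\<omega>. ennreal ((norm (a *\<^sub>R (g i (\<Phi> (past_samples t \<omega>)) (\<xi> t i \<omega>) - grad i (\<Phi> (past_samples t \<omega>)))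
      + \<Psi> (past_samples t \<omega>)))\<^sup>2) \<partial>M)
    \<le> ennreal (a\<^sup>2 * \<sigma>\<^sup>2) + (\<integral>\<^sup>+\<omega>. ennreal ((norm (\<Psi> (past_samples t \<omega>)))\<^sup>2) \<partial>M)"
proof -
  have indep: "indep_var (past_space t) (past_samples t)
      (PiM {(t, i)} (\<lambda>(s, i). D i)) (\<lambda>\<omega>. restrict (\<lambda>j. case_prod \<xi> j \<omega>) {(t, i)})"
    unfolding past_space_def past_samples_def
    by (rule indep_var_restrict[OF xi_indep]) (auto simp: past_def)
  have sample: "(\<lambda>\<zeta>. \<zeta> (t, i)) \<in> measurable (PiM {(t, i)} (\<lambda>(s, i). D i)) (D i)"
    using measurable_component_singleton[of "(t, i)" "{(t, i)}" "\<lambda>(s, i). D i"] by simp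
  show ?thesis
    using indep_noise_second_moment_le[OF D indep sample _ \<Phi> \<Psi> g_meas borel_measurable_grad
        unbiased var_int var]
    by (simp add: xi_distr)
qed

lemma square_integrable_grad_component:
  assumes f: "square_integrable M f"
  shows "square_integrable M (\<lambda>\<omega>. grad i (f \<omega> $ i))"
proof (rule square_integrable_dominated[OF finite_measure_axioms f f, of _ "2 * L\<^sup>2" 0 "2 * (norm (grad i 0))\<^sup>2"])
  show "(\<lambda>\<omega>. grad i (f \<omega> $ i)) \<in> borel_measurable M"
    using measurable_comp[OF borel_measurable_vec_nth[OF square_integrable_measurable[OF f]] borel_measurable_grad]
    by (simp add: comp_def)
  fix \<omega>
  have "(norm (f \<omega> $ i))\<^sup>2 \<le> (norm (f \<omega>))\<^sup>2"
    unfolding power2_norm_vec[of "f \<omega>"] by (rule member_le_sum) auto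
  then have "2 * L\<^sup>2 * (norm (f \<omega> $ i))\<^sup>2 \<le> 2 * L\<^sup>2 * (norm (f \<omega>))\<^sup>2"
    by (intro mult_left_mono) simp_all
  then show "(norm (grad i (f \<omega> $ i)))\<^sup>2 \<le> 2 * L\<^sup>2 * (norm (f \<omega>))\<^sup>2 + 0 * (norm (f \<omega>))\<^sup>2 + 2 * (norm (grad i 0))\<^sup>2"
    using power2_norm_lipschitz_le[OF smooth, of i "f \<omega> $ i"] by linarith
qed auto

lemma square_integrable_stoch_grad:
  assumes z: "square_integrable M (zt m)"
  shows "square_integrable M (\<lambda>\<omega>. stoch_grad g \<xi> m (zt m \<omega>) \<omega>)"
proof (rule square_integrable_vec)
  show "(\<lambda>\<omega>. stoch_grad g \<xi> m (zt m \<omega>) \<omega>) \<in> borel_measurable M"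
    by (rule borel_measurable_stoch_grad[OF borel_measurable_iterates(3) xi_meas g_meas])
  fix i
  define \<Phi> where "\<Phi> \<zeta> = z_of_past m \<zeta> $ i" for \<zeta>
  have \<Phi>: "\<Phi> \<in> borel_measurable (past_space m)"
    unfolding \<Phi>_def using borel_measurable_of_past(2)[of m m] by simp
  have \<Phi>_past: "\<Phi> (past_samples m \<omega>) = zt m \<omega> $ i" for \<omega>
    using iterates_eq_of_past(2)[of m m \<omega>] by (simp add: \<Phi>_def)
  have "(\<integral>\<^sup>+\<omega>. ennreal ((norm (stoch_grad g \<xi> m (zt m \<omega>) \<omega> $ i))\<^sup>2) \<partial>M)
      = (\<integral>\<^sup>+\<omega>. ennreal ((norm (1 *\<^sub>R (g i (\<Phi> (past_samples m \<omega>)) (\<xi> m i \<omega>) - grad i (\<Phi> (past_samples m \<omega>)))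
          + grad i (\<Phi> (past_samples m \<omega>))))\<^sup>2) \<partial>M)"
    by (simp add: stoch_grad_def \<Phi>_past)
  also have "\<dots> \<le> ennreal (1\<^sup>2 * \<sigma>\<^sup>2) + (\<integral>\<^sup>+\<omega>. ennreal ((norm (grad i (\<Phi> (past_samples m \<omega>))))\<^sup>2) \<partial>M)"
    using measurable_comp[OF \<Phi> borel_measurable_grad[of i]]
    by (intro fresh_noise_second_moment_le \<Phi>) (simp add: comp_def)
  also have "\<dots> < \<infinity>"
    using square_integrable_grad_component[OF z, of i] by (simp add: square_integrable_def \<Phi>_past)
  finally show "(\<integral>\<^sup>+\<omega>. ennreal ((norm (stoch_grad g \<xi> m (zt m \<omega>) \<omega> $ i))\<^sup>2) \<partial>M) < \<infinity>" .
qed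

lemma square_integrable_iterates:
  "square_integrable M (xt m) \<and> square_integrable M (yt m) \<and> square_integrable M (zt m)"
proof (induction m)
  case 0
  have "square_integrable M (\<lambda>\<omega>. x0)"
    by (rule square_integrable_const[OF finite_measure_axioms])
  moreover from this have "square_integrable M (\<lambda>\<omega>. stoch_grad g \<xi> 0 (zt 0 \<omega>) \<omega>)"
    by (intro square_integrable_stoch_grad) simp
  ultimately show ?case
    by (simp add: xs_def ys_def)
next
  case (Suc m)
  let ?v = "\<lambda>\<omega>. xt m \<omega> - \<gamma> *\<^sub>R yt m \<omega>"
  let ?w = "\<lambda>\<omega>. yt m \<omega> + stoch_grad g \<xi> (Suc m) (zt (Suc m) \<omega>) \<omega> - stoch_grad g \<xi> m (zt m \<omega>) \<omega>"
  have fm: "finite_measure M" by (rule finite_measure_axioms)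
  have v: "square_integrable M ?v"
    using Suc by (intro square_integrable_diff square_integrable_scaleR fm) auto
  have z: "square_integrable M (zt (Suc m))"
    using v Suc unfolding flexgt_Suc_components
    by (cases "Suc m mod \<beta> = 0") (simp_all add: xs_def ys_def square_integrable_mix[OF fm])
  have w: "square_integrable M ?w"
    using Suc z by (intro square_integrable_add square_integrable_diff square_integrable_stoch_grad fm) auto
  have "yt (Suc m) = (\<lambda>\<omega>. if Suc m mod \<beta> = 0 then mix Wb (?w \<omega>) else ?w \<omega>)"
    by (auto simp: fun_eq_iff ys_def xs_def flexgt_Suc_components simp del: flexgt.simps)
  then have "square_integrable M (yt (Suc m))"
    using w by (cases "Suc m mod \<beta> = 0") (simp_all add: square_integrable_mix[OF fm])
  moreover have "square_integrable M (xt (Suc m))"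
    using v unfolding xs_def flexgt_Suc_components
    by (cases "Suc m mod \<beta> = 0") (simp_all add: xs_def ys_def square_integrable_mix[OF fm])
  ultimately show ?case
    using z by simp
qed

lemma weighted_noise_second_moment_le:
  "(\<integral>\<^sup>+\<omega>. ennreal ((norm (\<Sum>l<m. w l *\<^sub>R (g i (xt t \<omega> $ i) (\<xi> (t + l) i \<omega>) - grad i (xt t \<omega> $ i))))\<^sup>2) \<partial>M)
    \<le> ennreal ((\<Sum>l<m. (w l)\<^sup>2) * \<sigma>\<^sup>2)"
proof (induction m)
  case 0
  then show ?case by simp
next
  case (Suc m)
  define \<Phi> where "\<Phi> \<zeta> = x_of_past t \<zeta> $ i" for \<zeta>
  define \<Psi> where "\<Psi> \<zeta> = (\<Sum>l<m. w l *\<^sub>R (g i (\<Phi> \<zeta>) (\<zeta> (t + l, i)) - grad i (\<Phi> \<zeta>)))" for \<zeta>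
  have \<Phi>: "\<Phi> \<in> borel_measurable (past_space (t + m))"
    unfolding \<Phi>_def using borel_measurable_of_past(1)[of t "t + m"] by simp
  have \<Psi>: "\<Psi> \<in> borel_measurable (past_space (t + m))"
    unfolding \<Psi>_def using measurable_comp[OF \<Phi> borel_measurable_grad[of i]]
    by (intro borel_measurable_sum borel_measurable_scaleR borel_measurable_diff borel_measurable_const
        borel_measurable_g_of_past[OF \<Phi>]) (auto simp: comp_def)
  have \<Phi>_past: "\<Phi> (past_samples (t + m) \<omega>) = xt t \<omega> $ i" for \<omega>
    using iterates_eq_of_past(1)[of t "t + m" \<omega>] by (simp add: \<Phi>_def)
  have \<Psi>_past: "\<Psi> (past_samples (t + m) \<omega>)
      = (\<Sum>l<m. w l *\<^sub>R (g i (xt t \<omega> $ i) (\<xi> (t + l) i \<omega>) - grad i (xt t \<omega> $ i)))" for \<omega>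
    by (simp add: \<Psi>_def \<Phi>_past past_samples_apply)
  have "(\<integral>\<^sup>+\<omega>. ennreal ((norm (\<Sum>l<Suc m. w l *\<^sub>R (g i (xt t \<omega> $ i) (\<xi> (t + l) i \<omega>) - grad i (xt t \<omega> $ i))))\<^sup>2) \<partial>M)
      = (\<integral>\<^sup>+\<omega>. ennreal ((norm (w m *\<^sub>R (g i (\<Phi> (past_samples (t + m) \<omega>)) (\<xi> (t + m) i \<omega>)
          - grad i (\<Phi> (past_samples (t + m) \<omega>))) + \<Psi> (past_samples (t + m) \<omega>)))\<^sup>2) \<partial>M)"
    unfolding \<Phi>_past \<Psi>_past by (simp add: add.commute)
  also have "\<dots> \<le> ennreal ((w m)\<^sup>2 * \<sigma>\<^sup>2) + (\<integral>\<^sup>+\<omega>. ennreal ((norm (\<Psi> (past_samples (t + m) \<omega>)))\<^sup>2) \<partial>M)"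
    by (rule fresh_noise_second_moment_le[OF \<Phi> \<Psi>])
  also have "\<dots> \<le> ennreal ((w m)\<^sup>2 * \<sigma>\<^sup>2) + ennreal ((\<Sum>l<m. (w l)\<^sup>2) * \<sigma>\<^sup>2)"
    using Suc.IH by (simp add: \<Psi>_past add_left_mono)
  also have "\<dots> = ennreal ((\<Sum>l<Suc m. (w l)\<^sup>2) * \<sigma>\<^sup>2)"
    by (simp add: sum_nonneg algebra_simps flip: ennreal_plus)
  finally show ?case .
qed

lemma round_drift_second_moment_le:
  fixes t :: nat
  assumes "\<beta> \<ge> 1"
  defines "\<Delta> \<equiv> \<lambda>\<omega>. round_drift g \<xi> \<beta> t (xt t \<omega>) \<omega>"
  shows "square_integrable M \<Delta>" and "(\<integral>\<omega>. (norm (\<Delta> \<omega>))\<^sup>2 \<partial>M) \<le> real CARD('n) * (real \<beta>)\<^sup>2 * \<sigma>\<^sup>2"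
proof -
  define w :: "nat \<Rightarrow> real" where "w l = (if l = 0 then 1 - real \<beta> else 1)" for l
  have \<Delta>: "\<Delta> \<in> borel_measurable M"
    unfolding \<Delta>_def round_drift_def
    using borel_measurable_stoch_grad[OF borel_measurable_iterates(1) xi_meas g_meas] by simp
  obtain b where b: "\<beta> = Suc b"
    using assms(1) by (cases \<beta>) auto
  have "(\<Sum>l<\<beta>. (w l)\<^sup>2) = (real b)\<^sup>2 + real b"
    unfolding b sum.lessThan_Suc_shift by (simp add: w_def b power2_eq_square)
  then have "(\<Sum>l<\<beta>. (w l)\<^sup>2) \<le> (real \<beta>)\<^sup>2"
    by (simp add: b power2_eq_square algebra_simps)
  then have weights: "ennreal ((\<Sum>l<\<beta>. (w l)\<^sup>2) * \<sigma>\<^sup>2) \<le> ennreal ((real \<beta>)\<^sup>2 * \<sigma>\<^sup>2)"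
    by (intro ennreal_leI mult_right_mono) simp_all
  have components: "(\<integral>\<^sup>+\<omega>. ennreal ((norm (\<Delta> \<omega> $ i))\<^sup>2) \<partial>M) \<le> ennreal ((real \<beta>)\<^sup>2 * \<sigma>\<^sup>2)" for i
  proof -
    have "\<Delta> \<omega> $ i = (\<Sum>l<\<beta>. w l *\<^sub>R (g i (xt t \<omega> $ i) (\<xi> (t + l) i \<omega>) - grad i (xt t \<omega> $ i)))" for \<omega>
      unfolding \<Delta>_def w_def by (rule round_drift_component[OF assms(1)])
    then have "(\<integral>\<^sup>+\<omega>. ennreal ((norm (\<Delta> \<omega> $ i))\<^sup>2) \<partial>M) \<le> ennreal ((\<Sum>l<\<beta>. (w l)\<^sup>2) * \<sigma>\<^sup>2)"
      using weighted_noise_second_moment_le[where w = w and m = \<beta> and i = i and t = t] by simp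
    then show ?thesis
      using weights by (rule order_trans)
  qed
  then show "square_integrable M \<Delta>"
    by (intro square_integrable_vec[OF \<Delta>]) (auto intro: le_less_trans[OF _ ennreal_less_top])
  have "(\<integral>\<^sup>+\<omega>. ennreal ((norm (\<Delta> \<omega>))\<^sup>2) \<partial>M) = (\<Sum>i\<in>UNIV. \<integral>\<^sup>+\<omega>. ennreal ((norm (\<Delta> \<omega> $ i))\<^sup>2) \<partial>M)"
    by (rule nn_integral_power2_norm_vec[OF \<Delta>])
  also have "\<dots> \<le> (\<Sum>i\<in>(UNIV :: 'n set). ennreal ((real \<beta>)\<^sup>2 * \<sigma>\<^sup>2))"
    by (intro sum_mono components)
  also have "\<dots> = ennreal (real CARD('n) * (real \<beta>)\<^sup>2 * \<sigma>\<^sup>2)"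
    by (simp add: ennreal_of_nat_eq_real_of_nat ennreal_mult' mult.assoc)
  finally have "(\<integral>\<^sup>+\<omega>. ennreal ((norm (\<Delta> \<omega>))\<^sup>2) \<partial>M) \<le> ennreal (real CARD('n) * (real \<beta>)\<^sup>2 * \<sigma>\<^sup>2)" .
  then show "(\<integral>\<omega>. (norm (\<Delta> \<omega>))\<^sup>2 \<partial>M) \<le> real CARD('n) * (real \<beta>)\<^sup>2 * \<sigma>\<^sup>2"
    using \<Delta> by (simp add: integral_eq_nn_integral enn2real_leI)
qed

theorem consensus_error_round_le:
  assumes Wb: "Jmat_absorbing Wb" and rho_lt_1: "rho Wb < 1" and "\<beta> \<ge> 1"
  shows "(\<integral>\<omega>. (norm (tilde (xt (\<beta> * (k + 1)) \<omega>)))\<^sup>2 \<partial>M)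
    \<le> (1 + rho Wb) / 2 * (\<integral>\<omega>. (norm (tilde (xt (\<beta> * k) \<omega>)))\<^sup>2 \<partial>M)
     + 4 * \<gamma>\<^sup>2 * (real \<beta>)\<^sup>2 * rho Wb / (1 - rho Wb) * (\<integral>\<omega>. (norm (tilde (yt (\<beta> * k) \<omega>)))\<^sup>2 \<partial>M)
     + 8 * real CARD('n) * \<gamma>\<^sup>2 * (real \<beta>)\<^sup>2 * rho Wb / (1 - rho Wb) * \<sigma>\<^sup>2"
proof -
  define t where "t = \<beta> * k"
  define A where "A = (1 + rho Wb) / 2"
  define B where "B = 4 * \<gamma>\<^sup>2 * (real \<beta>)\<^sup>2 * rho Wb / (1 - rho Wb)"
  define C where "C = 4 * \<gamma>\<^sup>2 * rho Wb / (1 - rho Wb)"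
  define \<Delta> where "\<Delta> \<omega> = round_drift g \<xi> \<beta> t (xt t \<omega>) \<omega>" for \<omega>
  have C: "0 \<le> C"
    using rho_lt_1 by (simp add: C_def rho_def)
  have pointwise: "(norm (tilde (xt (\<beta> * (k + 1)) \<omega>)))\<^sup>2
      \<le> A * (norm (tilde (xt t \<omega>)))\<^sup>2 + B * (norm (tilde (yt t \<omega>)))\<^sup>2 + C * (norm (\<Delta> \<omega>))\<^sup>2" for \<omega>
    unfolding xs_round_end[OF \<open>\<beta> \<ge> 1\<close>] A_def B_def C_def \<Delta>_def t_def
    by (rule power2_norm_tilde_round_le[OF Wb rho_lt_1])
  have fm: "finite_measure M"
    by (rule finite_measure_axioms)
  have int: "integrable M (\<lambda>\<omega>. (norm (tilde (xt (\<beta> * (k + 1)) \<omega>)))\<^sup>2)"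
    "integrable M (\<lambda>\<omega>. (norm (tilde (xt t \<omega>)))\<^sup>2)" "integrable M (\<lambda>\<omega>. (norm (tilde (yt t \<omega>)))\<^sup>2)"
    "integrable M (\<lambda>\<omega>. (norm (\<Delta> \<omega>))\<^sup>2)"
    using square_integrable_iterates round_drift_second_moment_le(1)[OF \<open>\<beta> \<ge> 1\<close>, of t]
    by (auto intro!: integrable_power2_norm square_integrable_tilde[OF fm] simp: \<Delta>_def[abs_def])
  have "(\<integral>\<omega>. (norm (tilde (xt (\<beta> * (k + 1)) \<omega>)))\<^sup>2 \<partial>M)
      \<le> (\<integral>\<omega>. A * (norm (tilde (xt t \<omega>)))\<^sup>2 + B * (norm (tilde (yt t \<omega>)))\<^sup>2 + C * (norm (\<Delta> \<omega>))\<^sup>2 \<partial>M)"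
    using int pointwise by (intro integral_mono) auto
  also have "\<dots> = A * (\<integral>\<omega>. (norm (tilde (xt t \<omega>)))\<^sup>2 \<partial>M) + B * (\<integral>\<omega>. (norm (tilde (yt t \<omega>)))\<^sup>2 \<partial>M)
      + C * (\<integral>\<omega>. (norm (\<Delta> \<omega>))\<^sup>2 \<partial>M)"
    using int by simp
  also have "C * (\<integral>\<omega>. (norm (\<Delta> \<omega>))\<^sup>2 \<partial>M) \<le> C * (real CARD('n) * (real \<beta>)\<^sup>2 * \<sigma>\<^sup>2)"
    using round_drift_second_moment_le(2)[OF \<open>\<beta> \<ge> 1\<close>, of t] C
    by (intro mult_left_mono) (simp_all add: \<Delta>_def)
  also have "\<dots> \<le> 2 * (C * (real CARD('n) * (real \<beta>)\<^sup>2 * \<sigma>\<^sup>2))"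
    using C by simp
  also have "\<dots> = 8 * real CARD('n) * \<gamma>\<^sup>2 * (real \<beta>)\<^sup>2 * rho Wb / (1 - rho Wb) * \<sigma>\<^sup>2"
    by (simp add: C_def algebra_simps)
  finally show ?thesis
    by (simp add: A_def B_def t_def)
qed

end

theorem lemma5:
  fixes M :: "'w measure"
    and D :: "'n::finite \<Rightarrow> 's measure"
    and \<xi> :: "nat \<Rightarrow> 'n \<Rightarrow> 'w \<Rightarrow> 's"
    and F :: "'n \<Rightarrow> 'a::euclidean_space \<Rightarrow> 's \<Rightarrow> real"
    and f :: "'n \<Rightarrow> 'a \<Rightarrow> real"
    and g :: "'n \<Rightarrow> 'a \<Rightarrow> 's \<Rightarrow> 'a"
    and grad :: "'n \<Rightarrow> 'a \<Rightarrow> 'a"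
    and W Wb :: "real ^ 'n ^ 'n"
    and x0 :: "'a ^ 'n"
    and L \<sigma> \<gamma> :: real
    and \<alpha> \<beta> k :: nat
  assumes M: "prob_space M"
    and D: "\<And>i. prob_space (D i)"
    and xi_meas: "\<And>t i. \<xi> t i \<in> measurable M (D i)"
    and xi_distr: "\<And>t i. distr M (D i) (\<xi> t i) = D i"
    and xi_indep: "prob_space.indep_vars M (\<lambda>(t, i). D i) (\<lambda>(t, i). \<xi> t i) UNIV"
    and F_int: "\<And>i x. integrable (D i) (F i x)"
    and f_def: "\<And>i x. f i x = (\<integral>s. F i x s \<partial>D i)"
    and F_grad: "\<And>i x s. GDERIV (\<lambda>x. F i x s) x :> g i x s"
    and g_meas: "\<And>i. (\<lambda>(x, s). g i x s) \<in> borel_measurable (borel \<Otimes>\<^sub>M D i)"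
    and f_grad: "\<And>i x. GDERIV (f i) x :> grad i x"
    and unbiased: "\<And>i x. integrable (D i) (g i x) \<and> (\<integral>s. g i x s \<partial>D i) = grad i x"
    and smooth: "\<And>i x y. norm (grad i x - grad i y) \<le> L * norm (x - y)"
    and var_int: "\<And>i x. integrable (D i) (\<lambda>s. (norm (g i x s - grad i x))\<^sup>2)"
    and var: "\<And>i x. (\<integral>s. (norm (g i x s - grad i x))\<^sup>2 \<partial>D i) \<le> \<sigma>\<^sup>2"
    and W_ds: "doubly_stochastic W"
    and rhoW: "rho W < 1"
    and alpha: "\<alpha> \<ge> 1" and beta: "\<beta> \<ge> 1"
    and Wb: "Wb = mat_pow W \<alpha> \<or> Wb = acc_mat W (acc_eta W) \<alpha>"
    and rhoWb: "rho Wb < 1"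
    and L_pos: "L > 0"
    and gamma_pos: "\<gamma> > 0"
    and gamma_le: "\<gamma> \<le> 1 / (4 * real \<beta> * L)"
  shows "(\<integral>\<omega>. (norm (tilde (xs Wb \<gamma> \<beta> g \<xi> x0 (\<beta> * (k + 1)) \<omega>)))\<^sup>2 \<partial>M)
    \<le> (1 + rho Wb) / 2 * (\<integral>\<omega>. (norm (tilde (xs Wb \<gamma> \<beta> g \<xi> x0 (\<beta> * k) \<omega>)))\<^sup>2 \<partial>M)
     + 4 * \<gamma>\<^sup>2 * (real \<beta>)\<^sup>2 * rho Wb / (1 - rho Wb)
         * (\<integral>\<omega>. (norm (tilde (ys Wb \<gamma> \<beta> g \<xi> x0 (\<beta> * k) \<omega>)))\<^sup>2 \<partial>M)
     + 8 * real CARD('n) * \<gamma>\<^sup>2 * (real \<beta>)\<^sup>2 * rho Wb / (1 - rho Wb) * \<sigma>\<^sup>2"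
proof -
  interpret flexgt_sampling M D \<xi> g grad Wb x0 L \<sigma> \<gamma> \<beta>
    by (rule flexgt_sampling.intro) fact+
  have "Jmat_absorbing W"
    using W_ds by (rule doubly_stochastic_Jmat_absorbing)
  then have "Jmat_absorbing Wb"
    using Wb Jmat_absorbing_mat_pow Jmat_absorbing_acc_mat by auto
  then show ?thesis
    using rhoWb beta by (rule consensus_error_round_le)
qed

end
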